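(* Let $D$ be a digraph with $\chi(D)>\omega$. Then both $\vec H_{\omega,\omega}$ and $\overleftarrow{H}_{\omega,\omega}$ embed into $D$ (as not necessarily induced subdigraphs).
   Context: A digraph is a pair $D=(V,E)$ with $E\subseteq V^2$ such that $uv\in E$ implies $vu\notin E$. The dichromatic number $\chi(D)$ is the minimal number of acyclic vertex sets (sets inducing no directed cycle) covering $V(D)$. $\vec H_{\omega,\omega}$ is the digraph on $\omega\times 2$ whose arcs are $(k,0)(\ell,1)$ for all $k\leq\ell<\omega$; $\overleftarrow{H}_{\omega,\omega}$ is the digraph on $\omega\times2$ whose arcs are $(\ell,1)(k,0)$ for all $k\leq\ell<\omega$. *)

theory Defs
  imports Main "HOL-Library.Countable_Set"
begin

definition digraph :: "'a set \<Rightarrow> ('a \<times> 'a) set \<Rightarrow> bool" where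
  "digraph V E \<longleftrightarrow> E \<subseteq> V \<times> V \<and> (\<forall>u v. (u, v) \<in> E \<longrightarrow> (v, u) \<notin> E)"

definition acyclic_set :: "('a \<times> 'a) set \<Rightarrow> 'a set \<Rightarrow> bool" where
  "acyclic_set E A \<longleftrightarrow> acyclic (E \<inter> (A \<times> A))"

definition dichromatic_le_omega :: "'a set \<Rightarrow> ('a \<times> 'a) set \<Rightarrow> bool" where
  "dichromatic_le_omega V E \<longleftrightarrow>
     (\<exists>\<C>. countable \<C> \<and> (\<forall>A\<in>\<C>. A \<subseteq> V \<and> acyclic_set E A) \<and> V \<subseteq> \<Union>\<C>)"

text \<open>Vertex set omega x 2 is modelled as nat \<times> bool, with False = 0 and True = 1.\<close>
definition H_right :: "((nat \<times> bool) \<times> (nat \<times> bool)) set" where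
  "H_right = {((k, False), (l, True)) | k l. k \<le> l}"

definition H_left :: "((nat \<times> bool) \<times> (nat \<times> bool)) set" where
  "H_left = {((l, True), (k, False)) | k l. k \<le> l}"

definition embeds :: "('b \<times> 'b) set \<Rightarrow> 'a set \<Rightarrow> ('a \<times> 'a) set \<Rightarrow> bool" where
  "embeds F V E \<longleftrightarrow> (\<exists>f. inj f \<and> range f \<subseteq> V \<and> (\<forall>(x, y) \<in> F. (f x, f y) \<in> E))"

end

theory Submission
  imports Defs "HOL-Library.Countable_Set_Type"
begin

unbundle cardinal_syntax

(* Without a copy of H_right, every infinite set A of vertices contains a finite nonempty F with
   finite common out-neighbourhood: otherwise a copy of H_right is built greedily inside A.
   Closing a set under adding such finite common out-neighbourhoods raises its cardinality at
   most to aleph_0, and a vertex outside a closed set has only finitely many in-neighbours in it.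
   Well-order W in order type |W|: the closures of the initial segments form a continuous chain
   whose successive differences are smaller than W, so by induction on |W| each difference has a
   colouring with countably many acyclic classes.  Pairing such a colour with a number exceeding
   the colours of the finitely many earlier in-neighbours glues these colourings (Zorn's lemma
   handles limit stages).  Reversing all arcs gives the statement for H_left. *)

section \<open>Acyclicity along chains\<close>

lemma chain_subset_image_mono:
  assumes "chain\<^sub>\<subseteq> C" "mono f"
  shows "chain\<^sub>\<subseteq> (f ` C)"
  using assms unfolding chain_subset_def mono_def by (simp add: ball_simps) metis

lemma Restr_Union_chain:
  assumes chain: "chain\<^sub>\<subseteq> C"
  shows "Restr E (\<Union>C) = (\<Union>X\<in>C. Restr E X)"
proof (intro equalityI subsetI)
  fix p assume "p \<in> Restr E (\<Union>C)"
  then obtain x y X Y where "p = (x, y)" "p \<in> E" "X \<in> C" "Y \<in> C" "x \<in> X" "y \<in> Y" by blast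
  moreover from chain \<open>X \<in> C\<close> \<open>Y \<in> C\<close> have "X \<subseteq> Y \<or> Y \<subseteq> X"
    unfolding chain_subset_def by blast
  ultimately show "p \<in> (\<Union>X\<in>C. Restr E X)" by blast
qed auto

lemma single_valued_Union_chain:
  assumes chain: "chain\<^sub>\<subseteq> R" and sv: "\<And>r. r \<in> R \<Longrightarrow> single_valued r"
  shows "single_valued (\<Union>R)"
proof (rule single_valuedI)
  fix x y z assume "(x, y) \<in> \<Union>R" "(x, z) \<in> \<Union>R"
  then obtain r s where "r \<in> R" "(x, y) \<in> r" "s \<in> R" "(x, z) \<in> s" by blast
  moreover from chain \<open>r \<in> R\<close> \<open>s \<in> R\<close> have "r \<subseteq> s \<or> s \<subseteq> r"
    unfolding chain_subset_def by blast
  ultimately show "y = z" using sv by (metis single_valuedD subsetD)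
qed

lemma trancl_Union_chain:
  assumes chain: "chain\<^sub>\<subseteq> R" and "(x, y) \<in> (\<Union>R)\<^sup>+"
  shows "\<exists>r\<in>R. (x, y) \<in> r\<^sup>+"
  using \<open>(x, y) \<in> (\<Union>R)\<^sup>+\<close>
proof (induction rule: trancl_induct)
  case (base y)
  then obtain r where "r \<in> R" "(x, y) \<in> r" by blast
  then show ?case by (blast intro: r_into_trancl)
next
  case (step y z)
  then obtain r s where "r \<in> R" "(x, y) \<in> r\<^sup>+" "s \<in> R" "(y, z) \<in> s" by blast
  from chain \<open>r \<in> R\<close> \<open>s \<in> R\<close> have "r \<subseteq> s \<or> s \<subseteq> r"
    unfolding chain_subset_def by blast
  then show ?case
  proof
    assume "r \<subseteq> s"
    with \<open>(x, y) \<in> r\<^sup>+\<close> have "(x, y) \<in> s\<^sup>+" by (rule trancl_mono)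
    then have "(x, z) \<in> s\<^sup>+" using \<open>(y, z) \<in> s\<close> by (rule trancl_into_trancl)
    with \<open>s \<in> R\<close> show ?thesis ..
  next
    assume "s \<subseteq> r"
    with \<open>(y, z) \<in> s\<close> have "(y, z) \<in> r" ..
    with \<open>(x, y) \<in> r\<^sup>+\<close> have "(x, z) \<in> r\<^sup>+" by (rule trancl_into_trancl)
    with \<open>r \<in> R\<close> show ?thesis ..
  qed
qed

lemma acyclic_Union_chain:
  assumes "chain\<^sub>\<subseteq> R" "\<And>r. r \<in> R \<Longrightarrow> acyclic r"
  shows "acyclic (\<Union>R)"
proof (rule acyclicI, intro allI notI)
  fix x assume "(x, x) \<in> (\<Union>R)\<^sup>+"
  then obtain r where "r \<in> R" "(x, x) \<in> r\<^sup>+" using trancl_Union_chain[OF assms(1)] by blast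
  with assms(2) show False unfolding acyclic_def by blast
qed

lemma acyclic_Restr_Union_chain:
  assumes "chain\<^sub>\<subseteq> K" "\<And>X. X \<in> K \<Longrightarrow> acyclic (Restr E X)"
  shows "acyclic (Restr E (\<Union>K))"
proof -
  have "chain\<^sub>\<subseteq> ((\<lambda>X. Restr E X) ` K)"
    by (rule chain_subset_image_mono[OF assms(1)]) (auto intro: monoI)
  then show ?thesis
    unfolding Restr_Union_chain[OF assms(1)] by (rule acyclic_Union_chain) (use assms(2) in auto)
qed

lemma trancl_Restr_Un_into_target:
  assumes no_arcs: "E \<inter> A \<times> B = {}"
  shows "(x, y) \<in> (Restr E (A \<union> B))\<^sup>+ \<Longrightarrow> y \<in> B \<Longrightarrow> (x, y) \<in> (Restr E B)\<^sup>+"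
proof (induction rule: trancl_induct)
  case (base y)
  then show ?case using no_arcs by blast
next
  case (step y z)
  then have "(y, z) \<in> Restr E B" using no_arcs by blast
  with step show ?case by (meson trancl.trancl_into_trancl trancl_domain SigmaD1 Int_iff)
qed

lemma acyclic_Restr_Un:
  assumes A: "acyclic (Restr E A)" and B: "acyclic (Restr E B)" and no_arcs: "E \<inter> A \<times> B = {}"
  shows "acyclic (Restr E (A \<union> B))"
proof (rule acyclicI, rule allI, rule notI)
  fix x assume cycle: "(x, x) \<in> (Restr E (A \<union> B))\<^sup>+"
  then have "x \<in> A \<union> B" by (auto dest: tranclD)
  then show False
  proof
    assume "x \<in> B"
    with cycle B show False by (auto dest: trancl_Restr_Un_into_target[OF no_arcs] simp: acyclic_def)
  next
    assume "x \<in> A"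
    (* reversed, the cycle is a path into A, and the reversed digraph has no arcs from B to A *)
    have "(x, x) \<in> ((Restr E (A \<union> B))\<inverse>)\<^sup>+"
      using cycle by (simp add: trancl_converse)
    moreover have "(Restr E (A \<union> B))\<inverse> = Restr (E\<inverse>) (B \<union> A)" by blast
    moreover have "E\<inverse> \<inter> B \<times> A = {}" using no_arcs by blast
    ultimately have "(x, x) \<in> (Restr (E\<inverse>) A)\<^sup>+"
      using \<open>x \<in> A\<close> trancl_Restr_Un_into_target[of "E\<inverse>" B A x x] by simp
    moreover have "Restr (E\<inverse>) A = (Restr E A)\<inverse>" by blast
    ultimately show False using A by (simp add: acyclic_def trancl_converse)
  qed
qed

section \<open>Building a copy of H_right\<close>

definition common_out_nbhd :: "'a set \<Rightarrow> ('a \<times> 'a) set \<Rightarrow> 'a set \<Rightarrow> 'a set" where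
  "common_out_nbhd V E F = {w \<in> V. \<forall>u\<in>F. (u, w) \<in> E}"

lemma embeds_H_right_if_infinite_common_out_nbhds:
  assumes "A \<subseteq> V" "infinite A"
    and infinite_nbhd: "\<And>F. F \<subseteq> A \<Longrightarrow> finite F \<Longrightarrow> F \<noteq> {} \<Longrightarrow> infinite (common_out_nbhd V E F)"
  shows "embeds H_right V E"
proof -
  define good :: "(nat \<Rightarrow> 'a) \<Rightarrow> nat \<Rightarrow> 'a \<Rightarrow> bool" where
    "good g n x \<longleftrightarrow> x \<notin> g ` {..<n} \<and>
       (if even n then x \<in> A else x \<in> common_out_nbhd V E (g ` {i. i < n \<and> even i}))" for g n x
  (* Even positions carry fresh vertices of A; position 2k+1 carries a fresh common out-neighbour
     of the vertices at the even positions up to 2k.  The vertex (k, t) goes to position 2k + t. *)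
  have "\<exists>g. \<forall>n. good g n (g n)"
  proof (rule dependent_wellorder_choice)
    fix f g :: "nat \<Rightarrow> 'a" and n x
    assume "\<And>m. m < n \<Longrightarrow> f m = g m"
    then have "f ` {..<n} = g ` {..<n}" "f ` {i. i < n \<and> even i} = g ` {i. i < n \<and> even i}"
      by (auto intro!: image_cong)
    then show "good f n x = good g n x" unfolding good_def by simp
  next
    fix n and g :: "nat \<Rightarrow> 'a"
    assume prev: "\<And>m. m < n \<Longrightarrow> good g m (g m)"
    show "\<exists>x. good g n x"
    proof (cases "even n")
      case True
      have "infinite (A - g ` {..<n})" using \<open>infinite A\<close> by (simp add: Diff_infinite_finite)
      then obtain x where "x \<in> A - g ` {..<n}" using infinite_imp_nonempty by (metis all_not_in_conv)
      with True show ?thesis unfolding good_def by auto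
    next
      case False
      let ?F = "g ` {i. i < n \<and> even i}"
      have "?F \<subseteq> A" using prev unfolding good_def by auto
      moreover have "g 0 \<in> ?F" using False by (simp add: odd_pos)
      ultimately have "infinite (common_out_nbhd V E ?F)" by (intro infinite_nbhd) auto
      then have "infinite (common_out_nbhd V E ?F - g ` {..<n})" by (simp add: Diff_infinite_finite)
      then obtain x where "x \<in> common_out_nbhd V E ?F - g ` {..<n}"
        using infinite_imp_nonempty by (metis all_not_in_conv)
      with False show ?thesis unfolding good_def by auto
    qed
  qed
  then obtain g where g: "\<And>n. good g n (g n)" by blast
  have "g n \<noteq> g m" if "m < n" for m n
    using g[of n] that unfolding good_def by auto
  then have "inj g" by (metis injI linorder_neqE_nat)
  define f where "f = g \<circ> (\<lambda>(k, t). 2 * k + of_bool t)"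
  have "inj (\<lambda>(k::nat, t::bool). 2 * k + of_bool t)"
    by (auto simp: inj_def split: if_splits) presburger+
  with \<open>inj g\<close> have "inj f" unfolding f_def by (rule inj_compose)
  moreover have "range f \<subseteq> V"
  proof -
    have "g n \<in> V" for n
      using g[of n] \<open>A \<subseteq> V\<close> unfolding good_def common_out_nbhd_def by (auto split: if_splits)
    then show ?thesis unfolding f_def by auto
  qed
  moreover have "(f x, f y) \<in> E" if "(x, y) \<in> H_right" for x y
  proof -
    from that obtain k l where "x = (k, False)" "y = (l, True)" "k \<le> l" unfolding H_right_def by blast
    moreover have "g (2 * k) \<in> g ` {i. i < 2 * l + 1 \<and> even i}" using \<open>k \<le> l\<close> by auto
    ultimately show ?thesis using g[of "2 * l + 1"] unfolding f_def good_def common_out_nbhd_def by auto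
  qed
  ultimately show ?thesis unfolding embeds_def by blast
qed

section \<open>Finitary closures and their cardinality\<close>

inductive_set finitary_closure :: "('a set \<Rightarrow> 'a set) \<Rightarrow> 'a set \<Rightarrow> 'a set"
  for R :: "'a set \<Rightarrow> 'a set" and Y :: "'a set" where
  base: "y \<in> Y \<Longrightarrow> y \<in> finitary_closure R Y"
| step: "finite F \<Longrightarrow> \<forall>u\<in>F. u \<in> finitary_closure R Y \<Longrightarrow> x \<in> R F \<Longrightarrow> x \<in> finitary_closure R Y"

lemma finitary_closure_mono:
  assumes "Y \<subseteq> Y'"
  shows "finitary_closure R Y \<subseteq> finitary_closure R Y'"
proof
  fix x assume "x \<in> finitary_closure R Y"
  then show "x \<in> finitary_closure R Y'"
  proof induction
    case (base y)
    with assms show ?case by (auto intro: finitary_closure.base)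
  next
    case (step F x)
    then show ?case by (intro finitary_closure.step[of F]) auto
  qed
qed

lemma finitary_closure_subset:
  assumes "Y \<subseteq> W" "\<And>F. F \<subseteq> W \<Longrightarrow> R F \<subseteq> W"
  shows "finitary_closure R Y \<subseteq> W"
proof
  fix x assume "x \<in> finitary_closure R Y"
  then show "x \<in> W"
  proof induction
    case (step F x)
    with assms(2)[of F] show ?case by auto
  qed (use assms(1) in auto)
qed

lemma finitary_closure_empty:
  assumes "R {} = {}"
  shows "finitary_closure R {} = {}"
proof -
  have "False" if "x \<in> finitary_closure R {}" for x
    using that
  proof induction
    case (step F x)
    then have "F = {}" by auto
    with step assms show ?case by simp
  qed simp
  then show ?thesis by blast
qed

lemma finitary_closure_Union_chain:
  assumes chain: "chain\<^sub>\<subseteq> C" and "C \<noteq> {}"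
  shows "finitary_closure R (\<Union>C) = (\<Union>X\<in>C. finitary_closure R X)"
proof
  have closure_chain: "subset.chain UNIV (finitary_closure R ` C)"
    using chain_subset_image_mono[OF chain, of "finitary_closure R"] finitary_closure_mono
    unfolding chain_subset_alt_def mono_def by blast
  show "finitary_closure R (\<Union>C) \<subseteq> (\<Union>X\<in>C. finitary_closure R X)"
  proof
    fix x assume "x \<in> finitary_closure R (\<Union>C)"
    then show "x \<in> (\<Union>X\<in>C. finitary_closure R X)"
    proof induction
      case (base y)
      then show ?case by (auto intro: finitary_closure.base)
    next
      case (step F x)
      then have "F \<subseteq> \<Union>(finitary_closure R ` C)" by blast
      then obtain B where "B \<in> finitary_closure R ` C" "F \<subseteq> B"
        using finite_subset_Union_chain[OF \<open>finite F\<close> _ _ closure_chain] \<open>C \<noteq> {}\<close> by blast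
      then obtain X where "X \<in> C" "F \<subseteq> finitary_closure R X" by blast
      with step show ?case by (intro UN_I[OF \<open>X \<in> C\<close>] finitary_closure.step[of F]) auto
    qed
  qed
  show "(\<Union>X\<in>C. finitary_closure R X) \<subseteq> finitary_closure R (\<Union>C)"
    by (intro UN_least finitary_closure_mono Union_upper)
qed

lemma card_of_less_infinite_if_finite:
  assumes "finite A" "infinite B"
  shows "|A| <o |B|"
  using finite_ordLess_infinite[OF card_of_Well_order card_of_Well_order, of A B] assms
  by (simp add: Field_card_of)

lemma card_of_UN_nat_le_infinite:
  assumes "infinite B" "\<And>n::nat. |A n| \<le>o |B|"
  shows "|\<Union>n. A n| \<le>o |B|"
  using assms by (intro card_of_UNION_ordLeq_infinite) (auto simp flip: infinite_iff_card_of_nat)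

lemma card_of_lists_le_infinite:
  assumes B: "infinite B" and A: "|A| \<le>o |B|"
  shows "|lists A| \<le>o |B|"
proof -
  define L where "L n = {xs \<in> lists A. length xs = n}" for n
  have "|L n| \<le>o |B|" for n
  proof (induction n)
    case 0
    have "L 0 = {[]}" by (auto simp: L_def)
    with B show ?case by (simp add: card_of_less_infinite_if_finite ordLess_imp_ordLeq)
  next
    case (Suc n)
    have "L (Suc n) \<subseteq> case_prod Cons ` (A \<times> L n)"
      by (auto simp: L_def length_Suc_conv)
    then have "|L (Suc n)| \<le>o |A \<times> L n|"
      by (meson card_of_image card_of_mono1 ordLeq_transitive)
    also have "|A \<times> L n| \<le>o |B|"
      using B A Suc
      by (intro card_of_Times_ordLeq_infinite_Field[of "|B|", unfolded Field_card_of])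
        (simp_all add: card_of_card_order_on)
    finally show ?case .
  qed
  moreover have "lists A = (\<Union>n. L n)" by (auto simp: L_def)
  ultimately show ?thesis using card_of_UN_nat_le_infinite[OF B] by metis
qed

lemma card_of_Fpow_le_infinite:
  assumes "infinite B" "|A| \<le>o |B|"
  shows "|Fpow A| \<le>o |B|"
proof -
  have "Fpow A \<subseteq> set ` lists A"
  proof
    fix F assume "F \<in> Fpow A"
    then obtain xs where "set xs = F" "F \<subseteq> A" using finite_list by (auto simp: Fpow_def)
    then show "F \<in> set ` lists A" by auto
  qed
  then have "|Fpow A| \<le>o |lists A|"
    by (meson card_of_image card_of_mono1 ordLeq_transitive)
  then show ?thesis using card_of_lists_le_infinite[OF assms] by (rule ordLeq_transitive)
qed

lemma card_of_finitary_closure: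
  assumes B: "infinite B" and Y: "|Y| \<le>o |B|" and R: "\<And>F. finite F \<Longrightarrow> |R F| \<le>o |B|"
  shows "|finitary_closure R Y| \<le>o |B|"
proof -
  define stage where "stage n = ((\<lambda>Z. Z \<union> \<Union>(R ` Fpow Z)) ^^ n) Y" for n
  have stage_Suc: "stage (Suc n) = stage n \<union> \<Union>(R ` Fpow (stage n))" for n
    by (simp add: stage_def)
  have "stage m \<subseteq> stage n" if "m \<le> n" for m n
    by (rule lift_Suc_mono_le[OF _ that]) (auto simp: stage_Suc)
  then have stage_chain: "subset.chain UNIV (range stage)"
    unfolding subset_chain_def by (metis nle_le rangeE subset_UNIV)
  have "finitary_closure R Y \<subseteq> (\<Union>n. stage n)"
  proof
    fix x assume "x \<in> finitary_closure R Y"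
    then show "x \<in> (\<Union>n. stage n)"
    proof induction
      case (base y)
      then have "y \<in> stage 0" by (simp add: stage_def)
      then show ?case by blast
    next
      case (step F x)
      then have "F \<subseteq> \<Union>(range stage)" by blast
      then obtain n where "F \<subseteq> stage n"
        using finite_subset_Union_chain[OF \<open>finite F\<close> _ _ stage_chain] by blast
      with step have "x \<in> stage (Suc n)" by (auto simp: stage_Suc Fpow_def)
      then show ?case by blast
    qed
  qed
  moreover have "|stage n| \<le>o |B|" for n
  proof (induction n)
    case 0
    then show ?case using Y by (simp add: stage_def)
  next
    case (Suc n)
    have "|\<Union>(R ` Fpow (stage n))| \<le>o |B|"
      using R by (intro card_of_UNION_ordLeq_infinite[OF B card_of_Fpow_le_infinite[OF B Suc]])
        (auto simp: Fpow_def)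
    with Suc show ?case
      unfolding stage_Suc
      by (intro card_of_Un_ordLeq_infinite_Field[of "|B|", unfolded Field_card_of])
        (simp_all add: B card_of_card_order_on)
  qed
  then have "|\<Union>n. stage n| \<le>o |B|" by (rule card_of_UN_nat_le_infinite[OF B])
  ultimately show ?thesis by (meson card_of_mono1 ordLeq_transitive)
qed

section \<open>Colouring digraphs without H_right\<close>

lemma single_valued_obtain_graph:
  assumes "single_valued P"
  obtains c where "P = (\<lambda>x. (x, c x)) ` Domain P"
proof
  define c where "c x = (SOME y. (x, y) \<in> P)" for x
  have "(x, c x) \<in> P" if "x \<in> Domain P" for x
    using that unfolding c_def by (auto intro: someI)
  with assms show "P = (\<lambda>x. (x, c x)) ` Domain P"
    by (auto simp: image_iff dest: single_valuedD)
qed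

lemma ofilter_subset_under:
  assumes "Well_order r" "ofilter r I" "a \<in> Field r" "a \<notin> I"
  shows "I \<subseteq> under r a"
proof
  fix s assume "s \<in> I"
  with assms(2,4) have "s \<in> Field r" "(a, s) \<notin> r"
    unfolding ofilter_def under_def by blast+
  moreover have "\<forall>x\<in>Field r. \<forall>y\<in>Field r. (x, y) \<in> r \<or> (y, x) \<in> r"
    using assms(1) by (simp add: wo_rel.TOTALS wo_rel_def)
  ultimately show "s \<in> under r a" using assms(3) unfolding under_def by blast
qed

lemma under_card_of:
  assumes "a \<in> A"
  shows "ofilter |A| (under |A| a)" "under |A| a \<subseteq> A" "a \<in> under |A| a"
proof -
  have wo: "wo_rel |A|" by (simp add: wo_rel_def card_of_Well_order)
  show "ofilter |A| (under |A| a)" by (rule wo_rel.under_ofilter[OF wo])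
  show "under |A| a \<subseteq> A" using under_Field[of "|A|" a] by (simp add: Field_card_of)
  show "a \<in> under |A| a" using Refl_under_in[OF wo_rel.REFL[OF wo]] assms by (simp add: Field_card_of)
qed

lemma card_of_under_less_infinite:
  assumes "infinite A" "a \<in> A"
  shows "|under |A| a| <o |A|"
proof -
  have "|underS |A| a| <o |A|"
    using card_of_underS[OF card_of_Card_order] assms(2) by (simp add: Field_card_of)
  moreover have "|{a}| <o |A|"
    using assms(1) by (simp add: card_of_less_infinite_if_finite)
  ultimately have "|underS |A| a \<union> {a}| <o |A|" by (rule card_of_Un_ordLess_infinite[OF assms(1)])
  moreover have "under |A| a \<subseteq> underS |A| a \<union> {a}" by (auto simp: under_def underS_def)
  ultimately show ?thesis using card_of_mono1 ordLeq_ordLess_trans by blast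
qed

lemma colouring_extension:
  fixes c d :: "'a \<Rightarrow> nat"
  assumes disjoint: "M \<inter> N = {}"
    and c: "\<And>n. acyclic (Restr E {x \<in> M. c x = n})"
    and d: "\<And>n. acyclic (Restr E {y \<in> N. d y = n})"
    and finite_in_nbrs: "\<And>y. y \<in> N \<Longrightarrow> finite {u \<in> M. (u, y) \<in> E}"
  obtains e :: "'a \<Rightarrow> nat"
  where "\<And>x. x \<in> M \<Longrightarrow> e x = c x" "\<And>n. acyclic (Restr E {x \<in> M \<union> N. e x = n})"
proof
  (* a new vertex y gets a colour whose second coordinate exceeds the colours of all its
     in-neighbours in M, so no arc enters the new part of a class from its old part *)
  define bound where "bound y = Suc (Max (insert 0 (c ` {u \<in> M. (u, y) \<in> E})))" for y
  define e where "e x = (if x \<in> M then c x else prod_encode (d x, bound x))" for x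
  show "e x = c x" if "x \<in> M" for x
    using that by (simp add: e_def)
  fix n
  let ?A = "{x \<in> M. c x = n}" and ?B = "{y \<in> N. e y = n}"
  have classes: "{x \<in> M \<union> N. e x = n} = ?A \<union> ?B"
    using disjoint by (auto simp: e_def)
  have "?B \<subseteq> {y \<in> N. d y = fst (prod_decode n)}"
  proof
    fix y assume "y \<in> ?B"
    with disjoint have "y \<in> N" "prod_encode (d y, bound y) = n" by (auto simp: e_def)
    then show "y \<in> {y \<in> N. d y = fst (prod_decode n)}" by (auto simp: prod_encode_inverse)
  qed
  then have "Restr E ?B \<subseteq> Restr E {y \<in> N. d y = fst (prod_decode n)}" by blast
  then have "acyclic (Restr E ?B)" by (rule acyclic_subset[OF d])
  moreover have "E \<inter> ?A \<times> ?B = {}"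
  proof (rule ccontr)
    assume "E \<inter> ?A \<times> ?B \<noteq> {}"
    then obtain u y where "(u, y) \<in> E" "u \<in> M" "c u = n" "y \<in> N" "e y = n" by blast
    then have "n \<in> c ` {u \<in> M. (u, y) \<in> E}" by blast
    with finite_in_nbrs[OF \<open>y \<in> N\<close>] have "n < bound y"
      unfolding bound_def by (simp add: le_imp_less_Suc)
    also have "\<dots> \<le> prod_encode (d y, bound y)" by (rule le_prod_encode_2)
    also have "\<dots> = n" using \<open>y \<in> N\<close> \<open>e y = n\<close> disjoint by (auto simp: e_def)
    finally show False by simp
  qed
  ultimately show "acyclic (Restr E {x \<in> M \<union> N. e x = n})"
    unfolding classes by (rule acyclic_Restr_Un[OF c])
qed

locale H_right_free =
  fixes V :: "'a set" and E :: "('a \<times> 'a) set"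
  assumes loop_free: "\<And>x. (x, x) \<notin> E"
    and finite_common_out_nbhd:
      "\<And>A. A \<subseteq> V \<Longrightarrow> infinite A \<Longrightarrow> \<exists>F\<subseteq>A. finite F \<and> F \<noteq> {} \<and> finite (common_out_nbhd V E F)"
begin

(* F \<noteq> {} matters: the common out-neighbourhood of {} is all of V. *)
definition closure_in :: "'a set \<Rightarrow> 'a set \<Rightarrow> 'a set" where
  "closure_in W = finitary_closure
     (\<lambda>F. if F \<noteq> {} \<and> finite (common_out_nbhd V E F) then common_out_nbhd V E F \<inter> W else {})"

lemma closure_in_mono: "Y \<subseteq> Y' \<Longrightarrow> closure_in W Y \<subseteq> closure_in W Y'"
  unfolding closure_in_def by (rule finitary_closure_mono)

lemma closure_in_incl: "Y \<subseteq> closure_in W Y"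
  unfolding closure_in_def by (auto intro: finitary_closure.base)

lemma closure_in_subset: "Y \<subseteq> W \<Longrightarrow> closure_in W Y \<subseteq> W"
  unfolding closure_in_def by (rule finitary_closure_subset) auto

lemma finite_in_nbrs_outside_closure_in:
  assumes "W \<subseteq> V" "Y \<subseteq> W" "w \<in> W" "w \<notin> closure_in W Y"
  shows "finite {u \<in> closure_in W Y. (u, w) \<in> E}"
proof (rule ccontr)
  let ?U = "{u \<in> closure_in W Y. (u, w) \<in> E}"
  assume "infinite ?U"
  moreover have "?U \<subseteq> V" using closure_in_subset[OF assms(2)] assms(1) by blast
  ultimately obtain F where F: "F \<subseteq> ?U" "finite F" "F \<noteq> {}" "finite (common_out_nbhd V E F)"
    using finite_common_out_nbhd by meson
  then have "w \<in> common_out_nbhd V E F \<inter> W"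
    using assms(1,3) unfolding common_out_nbhd_def by auto
  with F have "w \<in> closure_in W Y"
    unfolding closure_in_def by (intro finitary_closure.step[of F]) auto
  with assms(4) show False ..
qed

lemma card_of_closure_in_less:
  assumes "\<not> countable W" "|Y| <o |W|"
  shows "|closure_in W Y| <o |W|"
proof -
  have "infinite W" using assms(1) countable_finite by blast
  have "|UNIV :: nat set| <o |W|"
    using assms(1) countable_card_of_nat not_ordLeq_iff_ordLess[OF card_of_Well_order card_of_Well_order]
    by blast
  with assms(2) have "|Y <+> (UNIV :: nat set)| <o |W|"
    by (rule card_of_Plus_ordLess_infinite[OF \<open>infinite W\<close>])
  moreover have "|closure_in W Y| \<le>o |Y <+> (UNIV :: nat set)|"
    unfolding closure_in_def
    by (rule card_of_finitary_closure)
      (auto simp: card_of_Plus1 card_of_less_infinite_if_finite ordLess_imp_ordLeq)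
  ultimately show ?thesis using ordLeq_ordLess_trans by blast
qed

lemma card_of_closure_in_under_less:
  assumes "\<not> countable W" "w \<in> W"
  shows "|closure_in W (under |W| w)| <o |W|"
  using assms
  by (intro card_of_closure_in_less card_of_under_less_infinite) (auto dest: countable_finite)

definition colourable :: "'a set \<Rightarrow> bool" where
  "colourable W \<longleftrightarrow> (\<exists>c :: 'a \<Rightarrow> nat. \<forall>n. acyclic (Restr E {x \<in> W. c x = n}))"

lemma countable_colourable:
  assumes "countable W"
  shows "colourable W"
  unfolding colourable_def
proof (intro exI allI)
  fix n
  have "Restr E {x \<in> W. to_nat_on W x = n} = {}"
    using inj_on_to_nat_on[OF assms] loop_free by (auto dest: inj_onD)
  then show "acyclic (Restr E {x \<in> W. to_nat_on W x = n})" by (simp add: acyclic_def)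
qed

(* Graphs rather than functions make the partial
   colourings a family of sets ordered by inclusion, ready for Zorn's lemma. *)
definition partial_colouring :: "'a set \<Rightarrow> ('a \<times> nat) set \<Rightarrow> bool" where
  "partial_colouring W P \<longleftrightarrow> single_valued P \<and> (\<exists>I. ofilter |W| I \<and> Domain P = closure_in W I)
     \<and> (\<forall>n. acyclic (Restr E {x. (x, n) \<in> P}))"

lemma partial_colouring_obtain_colouring:
  assumes "partial_colouring W P"
  obtains c where "P = (\<lambda>x. (x, c x)) ` Domain P" "\<And>n. acyclic (Restr E {x \<in> Domain P. c x = n})"
proof -
  obtain c where c: "P = (\<lambda>x. (x, c x)) ` Domain P"
    using assms single_valued_obtain_graph unfolding partial_colouring_def by blast
  have "(x, y) \<in> P \<longleftrightarrow> x \<in> Domain P \<and> y = c x" for x y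
    using arg_cong[where f = "\<lambda>Q. (x, y) \<in> Q", OF c] by auto
  then have "{x \<in> Domain P. c x = n} = {x. (x, n) \<in> P}" for n
    by auto
  with assms c show thesis unfolding partial_colouring_def by (intro that) auto
qed

lemma partial_colouring_Union_chain:
  assumes chain: "chain\<^sub>\<subseteq> C" and colourings: "\<And>P. P \<in> C \<Longrightarrow> partial_colouring W P"
  shows "partial_colouring W (\<Union>C)"
proof (cases "C = {}")
  case True
  have "ofilter |W| {}" by (simp add: ofilter_def)
  moreover have "closure_in W {} = {}" unfolding closure_in_def by (rule finitary_closure_empty) simp
  ultimately show ?thesis using True by (auto simp: partial_colouring_def acyclic_def)
next
  case False
  have "\<forall>P\<in>C. \<exists>I. ofilter |W| I \<and> Domain P = closure_in W I"
    using colourings unfolding partial_colouring_def by blast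
  then obtain I where I: "\<And>P. P \<in> C \<Longrightarrow> ofilter |W| (I P) \<and> Domain P = closure_in W (I P)"
    by metis
  have wo: "wo_rel |W|" by (simp add: wo_rel_def card_of_Well_order)
  have "chain\<^sub>\<subseteq> (I ` C)"
    unfolding chain_subset_def using wo_rel.ofilter_linord[OF wo] I by blast
  then have "closure_in W (\<Union>(I ` C)) = (\<Union>P\<in>C. closure_in W (I P))"
    unfolding closure_in_def using False by (simp add: finitary_closure_Union_chain)
  also have "\<dots> = Domain (\<Union>C)" using I by (auto simp: Domain_Union)
  finally have "Domain (\<Union>C) = closure_in W (\<Union>(I ` C))" ..
  moreover have "ofilter |W| (\<Union>(I ` C))" using I by (blast intro: wo_rel.ofilter_UNION[OF wo])
  moreover have "single_valued (\<Union>C)"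
    using colourings by (intro single_valued_Union_chain[OF chain]) (auto simp: partial_colouring_def)
  moreover have "acyclic (Restr E {x. (x, n) \<in> \<Union>C})" for n
  proof -
    have "chain\<^sub>\<subseteq> ((\<lambda>P. {x. (x, n) \<in> P}) ` C)"
      by (rule chain_subset_image_mono[OF chain]) (auto intro: monoI)
    then have "acyclic (Restr E (\<Union>P\<in>C. {x. (x, n) \<in> P}))"
      using colourings by (intro acyclic_Restr_Union_chain) (auto simp: partial_colouring_def)
    moreover have "(\<Union>P\<in>C. {x. (x, n) \<in> P}) = {x. (x, n) \<in> \<Union>C}" by blast
    ultimately show ?thesis by simp
  qed
  ultimately show ?thesis unfolding partial_colouring_def by blast
qed

lemma partial_colouring_graph:
  assumes "ofilter |W| J" "\<And>n. acyclic (Restr E {x \<in> closure_in W J. e x = n})"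
  shows "partial_colouring W ((\<lambda>x. (x, e x)) ` closure_in W J)"
proof -
  have "{x. (x, n) \<in> (\<lambda>x. (x, e x)) ` closure_in W J} = {x \<in> closure_in W J. e x = n}" for n
    by auto
  with assms show ?thesis
    unfolding partial_colouring_def by (auto simp: single_valued_def image_iff)
qed

lemma partial_colouring_extend:
  assumes W: "W \<subseteq> V" "\<not> countable W"
    and smaller_colourable: "\<And>W'. |W'| <o |W| \<Longrightarrow> W' \<subseteq> V \<Longrightarrow> colourable W'"
    and P: "partial_colouring W P" and w: "w \<in> W" "w \<notin> Domain P"
  obtains P' where "partial_colouring W P'" "P \<subset> P'"
proof -
  obtain I where I: "ofilter |W| I" "Domain P = closure_in W I"
    using P unfolding partial_colouring_def by blast
  obtain c where c: "P = (\<lambda>x. (x, c x)) ` Domain P"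
    and c_acyclic: "\<And>n. acyclic (Restr E {x \<in> Domain P. c x = n})"
    using P by (rule partial_colouring_obtain_colouring) blast
  define J where "J = under |W| w"
  define N where "N = closure_in W J - Domain P"
  have J_ofilter: "ofilter |W| J" unfolding J_def using w(1) by (rule under_card_of(1))
  have "I \<subseteq> W" using I(1) by (simp add: ofilter_def Field_card_of)
  have "I \<subseteq> J"
    unfolding J_def using w closure_in_incl[of I W] I
    by (intro ofilter_subset_under) (auto simp: Field_card_of card_of_well_order_on)
  then have Dom_N: "Domain P \<union> N = closure_in W J"
    using closure_in_mono I(2) unfolding N_def by blast
  have "N \<subseteq> W" using closure_in_subset[OF under_card_of(2)[OF w(1)]] unfolding N_def J_def by blast
  moreover have "|N| <o |W|"
    using card_of_mono1[of N "closure_in W J"] card_of_closure_in_under_less[OF W(2) w(1)]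
    unfolding N_def J_def by (blast intro: ordLeq_ordLess_trans)
  ultimately obtain d :: "'a \<Rightarrow> nat" where d: "\<And>n. acyclic (Restr E {y \<in> N. d y = n})"
    using smaller_colourable W(1) unfolding colourable_def by blast
  have in_nbrs: "finite {u \<in> Domain P. (u, y) \<in> E}" if "y \<in> N" for y
    using that \<open>N \<subseteq> W\<close> unfolding N_def I(2)
    by (intro finite_in_nbrs_outside_closure_in[OF W(1) \<open>I \<subseteq> W\<close>]) auto
  have "Domain P \<inter> N = {}" by (auto simp: N_def)
  then obtain e where e: "\<And>x. x \<in> Domain P \<Longrightarrow> e x = c x"
    "\<And>n. acyclic (Restr E {x \<in> Domain P \<union> N. e x = n})"
    using colouring_extension[OF _ c_acyclic d in_nbrs] by blast
  show thesis
  proof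
    show "partial_colouring W ((\<lambda>x. (x, e x)) ` closure_in W J)"
      using e(2) unfolding Dom_N by (rule partial_colouring_graph[OF J_ofilter])
    have "P = (\<lambda>x. (x, e x)) ` Domain P" using c e(1) by (auto simp: image_iff)
    moreover have "w \<in> closure_in W J"
      using closure_in_incl under_card_of(3)[OF w(1)] unfolding J_def by blast
    ultimately show "P \<subset> (\<lambda>x. (x, e x)) ` closure_in W J" using w(2) Dom_N by blast
  qed
qed

lemma colourable_if_smaller_colourable:
  assumes W: "W \<subseteq> V" "\<not> countable W"
    and smaller_colourable: "\<And>W'. |W'| <o |W| \<Longrightarrow> W' \<subseteq> V \<Longrightarrow> colourable W'"
  shows "colourable W"
proof -
  have "\<exists>P\<in>{P. partial_colouring W P}. \<forall>P'\<in>{P. partial_colouring W P}. P \<subseteq> P' \<longrightarrow> P' = P"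
  proof (rule subset_Zorn')
    fix C assume "subset.chain {P. partial_colouring W P} C"
    then have "chain\<^sub>\<subseteq> C" "\<And>P. P \<in> C \<Longrightarrow> partial_colouring W P"
      by (auto simp: subset_chain_def chain_subset_def)
    then show "\<Union>C \<in> {P. partial_colouring W P}" by (simp add: partial_colouring_Union_chain)
  qed
  then obtain P where P: "partial_colouring W P"
    and maximal: "\<And>P'. partial_colouring W P' \<Longrightarrow> P \<subseteq> P' \<Longrightarrow> P' = P" by blast
  have "W \<subseteq> Domain P"
  proof
    fix w assume "w \<in> W"
    show "w \<in> Domain P"
    proof (rule ccontr)
      assume "w \<notin> Domain P"
      obtain P' where "partial_colouring W P'" "P \<subset> P'"
        by (rule partial_colouring_extend[OF W smaller_colourable P \<open>w \<in> W\<close> \<open>w \<notin> Domain P\<close>])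
      with maximal show False by blast
    qed
  qed
  obtain c :: "'a \<Rightarrow> nat" where "\<And>n. acyclic (Restr E {x \<in> Domain P. c x = n})"
    using P by (rule partial_colouring_obtain_colouring) blast
  with \<open>W \<subseteq> Domain P\<close> show ?thesis
    unfolding colourable_def by (blast intro: acyclic_subset)
qed

lemma colourable: "W \<subseteq> V \<Longrightarrow> colourable W"
proof (induction W rule: wf_induct_rule[OF wf_inv_image[OF wf_ordLess, where f = card_of]])
  case (1 W)
  show ?case
  proof (cases "countable W")
    case True
    then show ?thesis by (rule countable_colourable)
  next
    case False
    have "colourable W'" if "|W'| <o |W|" "W' \<subseteq> V" for W'
      using 1(1)[of W'] that by simp
    with \<open>W \<subseteq> V\<close> False show ?thesis by (rule colourable_if_smaller_colourable)
  qed
qed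

end

lemma H_right_free_if_not_embeds:
  assumes "digraph V E" "\<not> embeds H_right V E"
  shows "H_right_free V E"
proof
  show "(x, x) \<notin> E" for x
    using assms(1) unfolding digraph_def by blast
  show "\<exists>F\<subseteq>A. finite F \<and> F \<noteq> {} \<and> finite (common_out_nbhd V E F)" if "A \<subseteq> V" "infinite A" for A
    using embeds_H_right_if_infinite_common_out_nbhds[OF that] assms(2) by blast
qed

lemma dichromatic_le_omega_if_colouring:
  fixes c :: "'a \<Rightarrow> nat"
  assumes "\<And>n. acyclic (Restr E {x \<in> V. c x = n})"
  shows "dichromatic_le_omega V E"
  unfolding dichromatic_le_omega_def
proof (intro exI conjI)
  show "countable (range (\<lambda>n. {x \<in> V. c x = n}))" by simp
  show "\<forall>A\<in>range (\<lambda>n. {x \<in> V. c x = n}). A \<subseteq> V \<and> acyclic_set E A"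
    using assms unfolding acyclic_set_def by blast
  show "V \<subseteq> \<Union>(range (\<lambda>n. {x \<in> V. c x = n}))" by blast
qed

lemma embeds_H_right:
  assumes "digraph V E" "\<not> dichromatic_le_omega V E"
  shows "embeds H_right V E"
proof (rule ccontr)
  assume "\<not> embeds H_right V E"
  then interpret H_right_free V E by (rule H_right_free_if_not_embeds[OF assms(1)])
  obtain c :: "'a \<Rightarrow> nat" where "\<And>n. acyclic (Restr E {x \<in> V. c x = n})"
    using colourable[OF order_refl] unfolding colourable_def by blast
  then have "dichromatic_le_omega V E" by (rule dichromatic_le_omega_if_colouring)
  with assms(2) show False ..
qed

lemma digraph_converse: "digraph V (E\<inverse>) \<longleftrightarrow> digraph V E"
  unfolding digraph_def by auto

lemma dichromatic_le_omega_converse: "dichromatic_le_omega V (E\<inverse>) \<longleftrightarrow> dichromatic_le_omega V E"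
proof -
  have "Restr (E\<inverse>) A = (Restr E A)\<inverse>" for A by blast
  then show ?thesis unfolding dichromatic_le_omega_def acyclic_set_def by simp
qed

lemma embeds_H_left_iff_converse: "embeds H_left V E \<longleftrightarrow> embeds H_right V (E\<inverse>)"
proof -
  have "(\<forall>(x, y)\<in>H_left. (f x, f y) \<in> E) \<longleftrightarrow> (\<forall>(x, y)\<in>H_right. (f x, f y) \<in> E\<inverse>)" for f :: "nat \<times> bool \<Rightarrow> 'a"
    unfolding H_left_def H_right_def by blast
  then show ?thesis unfolding embeds_def by simp
qed

theorem proposition3p4:
  fixes V :: "'a set" and E :: "('a \<times> 'a) set"
  assumes "digraph V E"
    and "\<not> dichromatic_le_omega V E"
  shows "embeds H_right V E \<and> embeds H_left V E"
proof
  show "embeds H_right V E" using assms by (rule embeds_H_right)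
  show "embeds H_left V E"
    unfolding embeds_H_left_iff_converse using assms
    by (intro embeds_H_right) (simp_all add: digraph_converse dichromatic_le_omega_converse)
qed

end
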